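(* Let $G=(V,E,(p_{uv})_{(u,v)\in E})$ be an influence graph. For every partial realisation $\psi$, all partial realisations $\hat\psi,\hat\psi'$ with $\hat\psi\subseteq\hat\psi'$, and every $v\in V$, we have $\Delta^2_\psi(v\mid\hat\psi)\ge\Delta^2_\psi(v\mid\hat\psi')$ (the strong 2-level diffusion model is strongly adaptive submodular).
   Context: $G$ is a directed graph with activation probabilities $p_{uv}\in[0,1]$. $\mathbf L,\hat{\mathbf L}$ are independent random subsets of $E$, each containing every edge $(u,w)$ independently with probability $p_{uw}$. For $L\subseteq E$, $T\subseteq V$, $\sigma_L(T)$ is the number of nodes reachable by a directed path (length $\ge0$) in $(V,L)$ from $T$. For $T\subseteq V$, $\mathbf L^2(T):=\mathbf L\cup(\hat{\mathbf L}\cap\{(u,w)\in E:u\in T\})$. Realisations: $\Phi(u):=\{u\}\cup\{z:(u,z)\in\mathbf L\}$, $\hat\Phi(u):=\{u\}\cup\{z:(u,z)\in\hat{\mathbf L}\}$. A partial realisation $\psi$ is the restriction of $u\mapsto\{u\}\cup\{z:(u,z)\in L\}$ (for some $L\subseteq E$) to a set $dom(\psi)\subseteq V$; $\psi\subseteq\psi'$ means $dom(\psi)\subseteq dom(\psi')$ and they agree on $dom(\psi)$; $\psi\subseteq\Phi$ is the event $\Phi(u)=\psi(u)$ for all $u\in dom(\psi)$ (similarly for $\hat\Phi$). For $T\subseteq V$, $\sigma^2_{\mathbf L,\hat{\mathbf L},\psi}(T):=\sigma_{\mathbf L^2(T\setminus dom(\psi))}(T)$. Define $\Delta^2_\psi(v\mid\hat\psi):=\mathbb{E}\big[\sigma^2_{\mathbf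 L,\hat{\mathbf L},\psi}(\{v\}\cup dom(\psi)\cup dom(\hat\psi))-\sigma^2_{\mathbf L,\hat{\mathbf L},\psi}(dom(\psi)\cup dom(\hat\psi))\,\big|\,\psi\subseteq\Phi,\hat\psi\subseteq\hat\Phi\big]$ (conditional expectations are taken on events of positive probability). *)

theory Defs
  imports Complex_Main
begin

definition influence_graph :: "'a set \<Rightarrow> ('a \<times> 'a) set \<Rightarrow> ('a \<times> 'a \<Rightarrow> real) \<Rightarrow> bool" where
  "influence_graph V E p \<longleftrightarrow> finite V \<and> E \<subseteq> V \<times> V \<and> (\<forall>e\<in>E. 0 \<le> p e \<and> p e \<le> 1)"

(* probability that the random live-edge set equals L (each edge of E independently with prob. p) *)
definition edge_prob :: "('a \<times> 'a) set \<Rightarrow> ('a \<times> 'a \<Rightarrow> real) \<Rightarrow> ('a \<times> 'a) set \<Rightarrow> real" where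
  "edge_prob E p L = (\<Prod>e\<in>L. p e) * (\<Prod>e\<in>E - L. 1 - p e)"

definition realis :: "('a \<times> 'a) set \<Rightarrow> 'a \<Rightarrow> 'a set" where
  "realis L u = insert u {z. (u, z) \<in> L}"

(* event  psi \<subseteq> Phi  for the realisation induced by L *)
definition consistent :: "('a \<rightharpoonup> 'a set) \<Rightarrow> ('a \<times> 'a) set \<Rightarrow> bool" where
  "consistent \<psi> L \<longleftrightarrow> (\<forall>u\<in>dom \<psi>. \<psi> u = Some (realis L u))"

definition partial_realisation :: "'a set \<Rightarrow> ('a \<times> 'a) set \<Rightarrow> ('a \<rightharpoonup> 'a set) \<Rightarrow> bool" where
  "partial_realisation V E \<psi> \<longleftrightarrow> dom \<psi> \<subseteq> V \<and> (\<exists>L\<subseteq>E. consistent \<psi> L)"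

definition sigma :: "('a \<times> 'a) set \<Rightarrow> 'a set \<Rightarrow> nat" where
  "sigma L T = card ((L\<^sup>*) `` T)"

definition L2 :: "('a \<times> 'a) set \<Rightarrow> ('a \<times> 'a) set \<Rightarrow> ('a \<times> 'a) set \<Rightarrow> 'a set \<Rightarrow> ('a \<times> 'a) set" where
  "L2 E L Lh T = L \<union> (Lh \<inter> {(u, w). (u, w) \<in> E \<and> u \<in> T})"

definition sigma2 :: "('a \<times> 'a) set \<Rightarrow> ('a \<times> 'a) set \<Rightarrow> ('a \<times> 'a) set \<Rightarrow> ('a \<rightharpoonup> 'a set) \<Rightarrow> 'a set \<Rightarrow> nat" where
  "sigma2 E L Lh \<psi> T = sigma (L2 E L Lh (T - dom \<psi>)) T"

definition event_prob :: "('a \<times> 'a) set \<Rightarrow> ('a \<times> 'a \<Rightarrow> real) \<Rightarrow> ('a \<rightharpoonup> 'a set) \<Rightarrow> real" where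
  "event_prob E p \<psi> = (\<Sum>L\<in>Pow E. if consistent \<psi> L then edge_prob E p L else 0)"

(* Delta^2_psi(v | psih): conditional expectation given psi \<subseteq> Phi and psih \<subseteq> Phih,
   with L, Lh independent *)
definition Delta2 :: "('a \<times> 'a) set \<Rightarrow> ('a \<times> 'a \<Rightarrow> real) \<Rightarrow> ('a \<rightharpoonup> 'a set) \<Rightarrow> 'a \<Rightarrow> ('a \<rightharpoonup> 'a set) \<Rightarrow> real" where
  "Delta2 E p \<psi> v \<psi>h =
     (\<Sum>L\<in>Pow E. \<Sum>Lh\<in>Pow E.
        if consistent \<psi> L \<and> consistent \<psi>h Lh then
          edge_prob E p L * edge_prob E p Lh *
          (real (sigma2 E L Lh \<psi> (insert v (dom \<psi> \<union> dom \<psi>h)))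
           - real (sigma2 E L Lh \<psi> (dom \<psi> \<union> dom \<psi>h)))
        else 0)
     / (event_prob E p \<psi> * event_prob E p \<psi>h)"

end

theory Submission imports Defs begin

(* Given the live edges L and the second-level edges Lh, sigma2 of a seed set T counts the nodes
   L-reachable from T together with the Lh-out-neighbours of T - dom psi. This is a coverage
   function of T, so the gain of adding v can only shrink as T grows, pointwise in (L, Lh).
   Passing from psih to psih' additionally conditions on the Lh-edges leaving dom psih' - dom psih.
   Unless v is one of these nodes (and then the gain at dom psi \<union> dom psih' vanishes), the gain at
   the smaller seed set dom psi \<union> dom psih ignores those edges, so by independence of the edges
   its conditional expectation is the same under psih and psih'. *)

definition edge_expectation ::
    "('a \<times> 'a) set \<Rightarrow> ('a \<times> 'a \<Rightarrow> real) \<Rightarrow> (('a \<times> 'a) set \<Rightarrow> real) \<Rightarrow> real" where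
  "edge_expectation E p f = (\<Sum>L\<in>Pow E. edge_prob E p L * f L)"

(* The junk value 0 of division makes this 0 when Pr[psi \<subseteq> Phi] = 0. *)
definition cond_expectation ::
    "('a \<times> 'a) set \<Rightarrow> ('a \<times> 'a \<Rightarrow> real) \<Rightarrow> ('a \<rightharpoonup> 'a set) \<Rightarrow> (('a \<times> 'a) set \<Rightarrow> real) \<Rightarrow> real" where
  "cond_expectation E p \<psi> f =
     edge_expectation E p (\<lambda>L. of_bool (consistent \<psi> L) * f L) / event_prob E p \<psi>"

lemma edge_prob_nonneg:
  assumes "\<forall>e\<in>E. 0 \<le> p e \<and> p e \<le> 1" "L \<subseteq> E"
  shows "0 \<le> edge_prob E p L"
  unfolding edge_prob_def using assms by (intro mult_nonneg_nonneg prod_nonneg) auto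

lemma edge_prob_Un:
  assumes "finite E" "B \<subseteq> E" "M \<subseteq> B" "N \<subseteq> E - B"
  shows "edge_prob E p (M \<union> N) = edge_prob B p M * edge_prob (E - B) p N"
proof -
  have fin: "finite M" "finite N" "finite (B - M)" "finite (E - B - N)"
    using assms by (meson finite_Diff finite_subset)+
  have "E - (M \<union> N) = (B - M) \<union> (E - B - N)"
    using assms by auto
  then have "(\<Prod>e\<in>E - (M \<union> N). 1 - p e) = (\<Prod>e\<in>B - M. 1 - p e) * (\<Prod>e\<in>E - B - N. 1 - p e)"
    using fin by (auto intro: prod.union_disjoint)
  moreover have "(\<Prod>e\<in>M \<union> N. p e) = (\<Prod>e\<in>M. p e) * (\<Prod>e\<in>N. p e)"
    using fin assms by (intro prod.union_disjoint) auto
  ultimately show ?thesis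
    unfolding edge_prob_def by (simp add: algebra_simps)
qed

lemma sum_Pow_split:
  assumes "B \<subseteq> E"
  shows "(\<Sum>L\<in>Pow E. F L) = (\<Sum>M\<in>Pow B. \<Sum>N\<in>Pow (E - B). F (M \<union> N))"
proof -
  have bij: "bij_betw (\<lambda>(M, N). M \<union> N) (Pow B \<times> Pow (E - B)) (Pow E)"
    by (rule bij_betw_byWitness[where f' = "\<lambda>L. (L \<inter> B, L - B)"]) (use assms in auto)
  show ?thesis
    by (subst sum.reindex_bij_betw[OF bij, symmetric]) (simp add: sum.cartesian_product split_beta)
qed

lemma event_prob_eq_edge_expectation:
  "event_prob E p \<psi> = edge_expectation E p (\<lambda>L. of_bool (consistent \<psi> L))"
  unfolding event_prob_def edge_expectation_def by (intro sum.cong) auto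

lemma edge_expectation_const_one: "finite E \<Longrightarrow> edge_expectation E p (\<lambda>_. 1) = 1"
  using prod_add[of E p "\<lambda>e. 1 - p e"] by (simp add: edge_expectation_def edge_prob_def)

lemma edge_expectation_mono:
  assumes "\<forall>e\<in>E. 0 \<le> p e \<and> p e \<le> 1" "\<And>L. L \<subseteq> E \<Longrightarrow> f L \<le> g L"
  shows "edge_expectation E p f \<le> edge_expectation E p g"
  unfolding edge_expectation_def using assms edge_prob_nonneg
  by (intro sum_mono mult_left_mono) auto

lemma cond_expectation_mono:
  assumes "\<forall>e\<in>E. 0 \<le> p e \<and> p e \<le> 1"
    and "\<And>L. L \<subseteq> E \<Longrightarrow> consistent \<psi> L \<Longrightarrow> f L \<le> g L"
  shows "cond_expectation E p \<psi> f \<le> cond_expectation E p \<psi> g"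
proof -
  have "0 \<le> event_prob E p \<psi>"
    using edge_expectation_mono[OF assms(1), of "\<lambda>_. 0"]
    by (simp add: event_prob_eq_edge_expectation edge_expectation_def)
  then show ?thesis
    unfolding cond_expectation_def using assms
    by (intro divide_right_mono edge_expectation_mono) auto
qed

lemma cond_expectation_zero [simp]: "cond_expectation E p \<psi> (\<lambda>_. 0) = 0"
  by (simp add: cond_expectation_def edge_expectation_def)

lemma edge_expectation_product:
  assumes "finite E" "B \<subseteq> E"
    and h: "\<And>L. L \<subseteq> E \<Longrightarrow> h L = h (L \<inter> B)"
    and g: "\<And>L. L \<subseteq> E \<Longrightarrow> g L = g (L - B)"
  shows "edge_expectation E p (\<lambda>L. h L * g L) =
    edge_expectation B p h * edge_expectation (E - B) p g"
proof -
  have "edge_prob E p (M \<union> N) * (h (M \<union> N) * g (M \<union> N)) =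
      (edge_prob B p M * h M) * (edge_prob (E - B) p N * g N)"
    if "M \<subseteq> B" "N \<subseteq> E - B" for M N
  proof -
    have "M \<union> N \<subseteq> E" "(M \<union> N) \<inter> B = M" "(M \<union> N) - B = N"
      using that assms(2) by auto
    then show ?thesis
      using h g edge_prob_Un[OF assms(1,2) that, of p] by (simp add: algebra_simps)
  qed
  then show ?thesis
    unfolding edge_expectation_def sum_Pow_split[OF assms(2)] sum_product
    by (intro sum.cong) auto
qed

lemma consistent_cong:
  assumes "\<And>u. u \<in> dom \<psi> \<Longrightarrow> L `` {u} = L' `` {u}"
  shows "consistent \<psi> L \<longleftrightarrow> consistent \<psi> L'"
proof -
  have "realis L u = realis L' u" if "u \<in> dom \<psi>" for u
    using assms[OF that] unfolding realis_def Image_singleton by simp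
  then show ?thesis
    unfolding consistent_def by simp
qed

lemma consistent_map_le_iff:
  assumes "\<psi> \<subseteq>\<^sub>m \<psi>'"
  shows "consistent \<psi>' L \<longleftrightarrow>
    consistent (\<psi>' |` (dom \<psi>' - dom \<psi>)) L \<and> consistent \<psi> L"
proof -
  have agree: "\<psi>' u = \<psi> u" if "u \<in> dom \<psi>" for u
    using assms that unfolding map_le_def by simp
  have "consistent \<psi>' L \<longleftrightarrow>
      (\<forall>u\<in>dom \<psi>' - dom \<psi>. \<psi>' u = Some (realis L u)) \<and> (\<forall>u\<in>dom \<psi>. \<psi>' u = Some (realis L u))"
    unfolding consistent_def using map_le_implies_dom_le[OF assms] by blast
  moreover have "dom \<psi>' \<inter> (dom \<psi>' - dom \<psi>) = dom \<psi>' - dom \<psi>"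
    by blast
  ultimately show ?thesis
    unfolding consistent_def using agree by simp
qed

lemma edge_expectation_consistent_extend:
  assumes "finite E" "\<psi> \<subseteq>\<^sub>m \<psi>'"
    and f: "\<And>L. L \<subseteq> E \<Longrightarrow> f L = f (L - (dom \<psi>' - dom \<psi>) \<times> UNIV)"
  shows "edge_expectation E p (\<lambda>L. of_bool (consistent \<psi>' L) * f L) =
    event_prob (E \<inter> (dom \<psi>' - dom \<psi>) \<times> UNIV) p (\<psi>' |` (dom \<psi>' - dom \<psi>)) *
    edge_expectation E p (\<lambda>L. of_bool (consistent \<psi> L) * f L)"
proof -
  define S where "S = dom \<psi>' - dom \<psi>"
  define B where "B = E \<inter> S \<times> UNIV"
  define g where "g = (\<lambda>L. of_bool (consistent \<psi> L) * f L)"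
  have B: "B \<subseteq> E" "finite B"
    using assms(1) finite_subset unfolding B_def by auto
  have new_obs_on_B: "of_bool (consistent (\<psi>' |` S) L) = of_bool (consistent (\<psi>' |` S) (L \<inter> B))"
    if "L \<subseteq> E" for L :: "('a \<times> 'a) set"
    using that by (intro arg_cong[of _ _ of_bool] consistent_cong) (auto simp: B_def)
  have g_off_B: "g L = g (L - B)" if "L \<subseteq> E" for L
  proof -
    have "consistent \<psi> L \<longleftrightarrow> consistent \<psi> (L - B)"
      by (rule consistent_cong) (auto simp: B_def S_def)
    moreover have "L - B = L - S \<times> UNIV"
      using that by (auto simp: B_def)
    ultimately show ?thesis
      using f[OF that] by (simp add: g_def S_def)
  qed
  have "edge_expectation E p (\<lambda>L. of_bool (consistent \<psi>' L) * f L) =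
      edge_expectation E p (\<lambda>L. of_bool (consistent (\<psi>' |` S) L) * g L)"
    unfolding S_def g_def consistent_map_le_iff[OF assms(2)] by (simp add: of_bool_conj mult.assoc)
  also have "\<dots> = edge_expectation B p (\<lambda>L. of_bool (consistent (\<psi>' |` S) L)) *
      edge_expectation (E - B) p g"
    by (rule edge_expectation_product[where h = "\<lambda>L. of_bool (consistent (\<psi>' |` S) L)" and g = g,
        OF assms(1) B(1) new_obs_on_B g_off_B])
  also have "edge_expectation (E - B) p g = edge_expectation E p g"
    using edge_expectation_product[OF assms(1) B(1), of "\<lambda>_. 1" g p] g_off_B
      edge_expectation_const_one[OF B(2)] by simp
  finally show ?thesis
    by (simp add: event_prob_eq_edge_expectation B_def S_def g_def)
qed

lemma cond_expectation_consistent_extend: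
  assumes "finite E" "\<psi> \<subseteq>\<^sub>m \<psi>'" "event_prob E p \<psi>' \<noteq> 0"
    and "\<And>L. L \<subseteq> E \<Longrightarrow> f L = f (L - (dom \<psi>' - dom \<psi>) \<times> UNIV)"
  shows "cond_expectation E p \<psi>' f = cond_expectation E p \<psi> f"
proof -
  let ?Q = "event_prob (E \<inter> (dom \<psi>' - dom \<psi>) \<times> UNIV) p (\<psi>' |` (dom \<psi>' - dom \<psi>))"
  have "event_prob E p \<psi>' = ?Q * event_prob E p \<psi>"
    using edge_expectation_consistent_extend[OF assms(1,2), of "\<lambda>_. 1" p]
    by (simp add: event_prob_eq_edge_expectation)
  moreover have "edge_expectation E p (\<lambda>L. of_bool (consistent \<psi>' L) * f L) =
      ?Q * edge_expectation E p (\<lambda>L. of_bool (consistent \<psi> L) * f L)"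
    by (rule edge_expectation_consistent_extend[where f = f, OF assms(1,2,4)])
  ultimately show ?thesis
    using assms(3) unfolding cond_expectation_def by simp
qed

lemma rtrancl_L2_Image:
  assumes "S \<subseteq> T"
  shows "(L2 E L Lh S)\<^sup>* `` T = L\<^sup>* `` (T \<union> (Lh \<inter> E) `` S)"
proof
  show "(L2 E L Lh S)\<^sup>* `` T \<subseteq> L\<^sup>* `` (T \<union> (Lh \<inter> E) `` S)"
  proof
    fix x assume "x \<in> (L2 E L Lh S)\<^sup>* `` T"
    then obtain t where t: "t \<in> T" "(t, x) \<in> (L2 E L Lh S)\<^sup>*"
      by blast
    from t(2) show "x \<in> L\<^sup>* `` (T \<union> (Lh \<inter> E) `` S)"
    proof (induction rule: rtrancl_induct)
      case base
      then show ?case using t(1) by blast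
    next
      case (step y z)
      show ?case
      proof (cases "(y, z) \<in> L")
        case True
        then show ?thesis using step.IH by (blast intro: rtrancl_into_rtrancl)
      next
        case False
        then show ?thesis using step.hyps(2) by (auto simp: L2_def)
      qed
    qed
  qed
  show "L\<^sup>* `` (T \<union> (Lh \<inter> E) `` S) \<subseteq> (L2 E L Lh S)\<^sup>* `` T"
  proof
    fix x assume "x \<in> L\<^sup>* `` (T \<union> (Lh \<inter> E) `` S)"
    then obtain k where k: "k \<in> T \<union> (Lh \<inter> E) `` S" "(k, x) \<in> L\<^sup>*"
      by blast
    have "L \<subseteq> L2 E L Lh S"
      by (auto simp: L2_def)
    then have kx: "(k, x) \<in> (L2 E L Lh S)\<^sup>*"
      using rtrancl_mono k(2) by blast
    show "x \<in> (L2 E L Lh S)\<^sup>* `` T"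
    proof (cases "k \<in> T")
      case True
      then show ?thesis using kx by blast
    next
      case False
      then obtain u where "u \<in> S" "(u, k) \<in> L2 E L Lh S"
        using k(1) by (auto simp: L2_def)
      then show ?thesis
        using kx assms by (blast intro: converse_rtrancl_into_rtrancl)
    qed
  qed
qed

lemma sigma2_eq_card: "sigma2 E L Lh \<psi> T = card (L\<^sup>* `` (T \<union> (Lh \<inter> E) `` (T - dom \<psi>)))"
  unfolding sigma2_def sigma_def by (simp add: rtrancl_L2_Image)

lemma sigma2_remove_edges:
  assumes "S \<inter> (T - dom \<psi>) = {}"
  shows "sigma2 E L (Lh - S \<times> UNIV) \<psi> T = sigma2 E L Lh \<psi> T"
proof -
  have "L2 E L (Lh - S \<times> UNIV) (T - dom \<psi>) = L2 E L Lh (T - dom \<psi>)"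
    using assms unfolding L2_def by blast
  then show ?thesis
    unfolding sigma2_def by simp
qed

definition sigma2_gain ::
    "('a \<times> 'a) set \<Rightarrow> ('a \<times> 'a) set \<Rightarrow> ('a \<times> 'a) set \<Rightarrow> ('a \<rightharpoonup> 'a set) \<Rightarrow> 'a \<Rightarrow> 'a set \<Rightarrow> real" where
  "sigma2_gain E L Lh \<psi> v T = real (sigma2 E L Lh \<psi> (insert v T)) - real (sigma2 E L Lh \<psi> T)"

lemma sigma2_gain_mem: "v \<in> T \<Longrightarrow> sigma2_gain E L Lh \<psi> v T = 0"
  by (simp add: sigma2_gain_def insert_absorb)

lemma card_Un_diff_antimono:
  assumes "finite C" "finite B" "A \<subseteq> B"
  shows "real (card (C \<union> B)) - real (card B) \<le> real (card (C \<union> A)) - real (card A)"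
proof -
  have "finite A"
    using assms finite_subset by blast
  have card_Un: "card (C \<union> X) = card X + card (C - X)" if "finite X" for X
    using card_Un_disjoint[of X "C - X"] that assms(1) by (simp add: Un_commute)
  have "card (C - B) \<le> card (C - A)"
    using assms by (intro card_mono) auto
  then show ?thesis
    using card_Un[OF \<open>finite A\<close>] card_Un[OF assms(2)] by simp
qed

lemma sigma2_gain_antimono:
  assumes "finite E" "L \<subseteq> E" "finite T'" "T \<subseteq> T'"
  shows "sigma2_gain E L Lh \<psi> v T' \<le> sigma2_gain E L Lh \<psi> v T"
proof -
  define R where "R = (\<lambda>X. L\<^sup>* `` (X \<union> (Lh \<inter> E) `` (X - dom \<psi>)))"
  have sigma2_R: "sigma2 E L Lh \<psi> X = card (R X)" for X
    by (simp add: R_def sigma2_eq_card)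
  have R_insert: "R (insert v X) = R {v} \<union> R X" for X
    unfolding R_def by auto
  have "finite L"
    using assms(1,2) finite_subset by blast
  then have finite_R: "finite (R X)" if "finite X" for X
    using that assms(1) unfolding R_def by (intro finite_rtrancl_Image finite_UnI finite_Image) auto
  have "R T \<subseteq> R T'"
    using assms(4) unfolding R_def by (intro Image_mono Un_mono) auto
  from card_Un_diff_antimono[OF finite_R[of "{v}"] finite_R[OF assms(3)] this]
  show ?thesis
    unfolding sigma2_gain_def sigma2_R R_insert[of T] R_insert[of T'] by simp
qed

lemma sigma2_gain_nonneg:
  assumes "finite E" "L \<subseteq> E" "finite T"
  shows "0 \<le> sigma2_gain E L Lh \<psi> v T"
proof -
  have "sigma2_gain E L Lh \<psi> v (insert v T) \<le> sigma2_gain E L Lh \<psi> v T"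
    using assms by (intro sigma2_gain_antimono) auto
  then show ?thesis
    by (simp add: sigma2_gain_mem)
qed

lemma Delta2_eq_cond_expectation:
  "Delta2 E p \<psi> v \<chi> = cond_expectation E p \<psi>
     (\<lambda>L. cond_expectation E p \<chi> (\<lambda>Lh. sigma2_gain E L Lh \<psi> v (dom \<psi> \<union> dom \<chi>)))"
proof -
  define g where "g = (\<lambda>L Lh. sigma2_gain E L Lh \<psi> v (dom \<psi> \<union> dom \<chi>))"
  have inner: "edge_prob E p L * (of_bool (consistent \<psi> L) * cond_expectation E p \<chi> (g L)) =
      (\<Sum>Lh\<in>Pow E. if consistent \<psi> L \<and> consistent \<chi> Lh
         then edge_prob E p L * edge_prob E p Lh * g L Lh else 0) / event_prob E p \<chi>" for L
    unfolding cond_expectation_def edge_expectation_def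
    by (cases "consistent \<psi> L") (auto simp: sum_distrib_left mult.assoc intro!: sum.cong)
  have "cond_expectation E p \<psi> (\<lambda>L. cond_expectation E p \<chi> (g L)) =
      (\<Sum>L\<in>Pow E. (\<Sum>Lh\<in>Pow E. if consistent \<psi> L \<and> consistent \<chi> Lh
         then edge_prob E p L * edge_prob E p Lh * g L Lh else 0) / event_prob E p \<chi>)
      / event_prob E p \<psi>"
    by (simp only: cond_expectation_def[of E p \<psi>] edge_expectation_def inner)
  also have "\<dots> = Delta2 E p \<psi> v \<chi>"
    unfolding Delta2_def g_def sigma2_gain_def
    by (simp add: sum_divide_distrib[symmetric] divide_divide_eq_left')
  finally show ?thesis
    unfolding g_def ..
qed

theorem lemma14:
  fixes V :: "'a set" and E :: "('a \<times> 'a) set" and p :: "'a \<times> 'a \<Rightarrow> real"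
    and \<psi> \<psi>h \<psi>h' :: "'a \<rightharpoonup> 'a set" and v :: 'a
  assumes "influence_graph V E p"
    and "partial_realisation V E \<psi>"
    and "partial_realisation V E \<psi>h"
    and "partial_realisation V E \<psi>h'"
    and "\<psi>h \<subseteq>\<^sub>m \<psi>h'"
    and "v \<in> V"
    and "event_prob E p \<psi> > 0"
    and "event_prob E p \<psi>h > 0"
    and "event_prob E p \<psi>h' > 0"
  shows "Delta2 E p \<psi> v \<psi>h \<ge> Delta2 E p \<psi> v \<psi>h'"
proof -
  have "finite V" and p01: "\<forall>e\<in>E. 0 \<le> p e \<and> p e \<le> 1" and "E \<subseteq> V \<times> V"
    using assms(1) by (auto simp: influence_graph_def)
  then have finE: "finite E"
    using finite_subset by blast
  define T where "T = dom \<psi> \<union> dom \<psi>h"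
  define T' where "T' = dom \<psi> \<union> dom \<psi>h'"
  have "finite T" "finite T'" "T \<subseteq> T'"
    using assms(2-5) \<open>finite V\<close> map_le_implies_dom_le[OF assms(5)] finite_subset
    unfolding T_def T'_def partial_realisation_def by blast+
  have gain_nonneg: "0 \<le> cond_expectation E p \<psi>h (\<lambda>Lh. sigma2_gain E L Lh \<psi> v T)" if "L \<subseteq> E" for L
    using cond_expectation_mono[OF p01, of \<psi>h "\<lambda>_. 0"] sigma2_gain_nonneg[OF finE that \<open>finite T\<close>]
    by simp
  show ?thesis
  proof (cases "v \<in> T'")
    case True
    then have "Delta2 E p \<psi> v \<psi>h' = 0"
      by (simp add: Delta2_eq_cond_expectation sigma2_gain_mem T'_def)
    moreover have "0 \<le> Delta2 E p \<psi> v \<psi>h"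
      using cond_expectation_mono[OF p01, of \<psi> "\<lambda>_. 0"] gain_nonneg
      by (simp add: Delta2_eq_cond_expectation T_def)
    ultimately show ?thesis
      by simp
  next
    case False
    have "cond_expectation E p \<psi>h' (\<lambda>Lh. sigma2_gain E L Lh \<psi> v T) =
        cond_expectation E p \<psi>h (\<lambda>Lh. sigma2_gain E L Lh \<psi> v T)" for L
    proof (rule cond_expectation_consistent_extend[OF finE assms(5)])
      show "event_prob E p \<psi>h' \<noteq> 0"
        using assms(9) by simp
      have "(dom \<psi>h' - dom \<psi>h) \<inter> (X - dom \<psi>) = {}" if "X \<subseteq> insert v T" for X
        using False that unfolding T_def T'_def by blast
      then show "sigma2_gain E L Lh \<psi> v T =
          sigma2_gain E L (Lh - (dom \<psi>h' - dom \<psi>h) \<times> UNIV) \<psi> v T" for Lh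
        unfolding sigma2_gain_def by (simp add: sigma2_remove_edges subset_insertI)
    qed
    moreover have "Delta2 E p \<psi> v \<psi>h' \<le>
        cond_expectation E p \<psi> (\<lambda>L. cond_expectation E p \<psi>h' (\<lambda>Lh. sigma2_gain E L Lh \<psi> v T))"
      unfolding Delta2_eq_cond_expectation T'_def[symmetric]
      using sigma2_gain_antimono[OF finE _ \<open>finite T'\<close> \<open>T \<subseteq> T'\<close>]
      by (intro cond_expectation_mono[OF p01]) auto
    ultimately show ?thesis
      by (simp add: Delta2_eq_cond_expectation T_def)
  qed
qed

end
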